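(* Let $\nu\ge3$ be a square-free integer with $\nu\equiv2$ or $3\pmod 4$, and for $n\ge0$ let $P_n(t)=(t^2-\nu)^{\circ n}\in\mathbb{Z}[t]$ (so $P_0(t)=t$). For $n\ge1$ write $P_n(t)=R_n(t)t^4+D_nt^2+C_n$ with $R_n\in\mathbb{Z}[t]$ and $D_n,C_n\in\mathbb{Z}$. Let $p$ be an odd prime not dividing $\nu$ such that $p$ divides $C_n$ for some $n\ge1$, and let $n(p)$ be the least positive integer $n$ with $p\mid C_n$. Then for every $n\ge0$, the polynomial $\bar P_n^2\,\bar R_{n(p)}(\bar P_n)+\bar D_{n(p)}\in\mathbb{F}_p[t]$ is separable (has no repeated irreducible factor).
   Context: Bars denote reduction modulo $p$. *)

theory Defs
  imports "Berlekamp_Zassenhaus.Finite_Field"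
    "HOL-Computational_Algebra.Squarefree"
    "HOL-Computational_Algebra.Polynomial"
begin

fun Ppoly :: "int \<Rightarrow> nat \<Rightarrow> int poly" where
  "Ppoly nu 0 = [:0, 1:]"
| "Ppoly nu (Suc n) = pcompose [:- nu, 0, 1:] (Ppoly nu n)"

text \<open>For n >= 1, P_n(t) = R_n(t) t^4 + D_n t^2 + C_n (P_n is even, so its
  coefficients of t and t^3 vanish and this decomposition is unique).\<close>
definition Rpoly :: "int \<Rightarrow> nat \<Rightarrow> int poly" where
  "Rpoly nu n = poly_shift 4 (Ppoly nu n)"

definition Dcoef :: "int \<Rightarrow> nat \<Rightarrow> int" where
  "Dcoef nu n = coeff (Ppoly nu n) 2"

definition Ccoef :: "int \<Rightarrow> nat \<Rightarrow> int" where
  "Ccoef nu n = coeff (Ppoly nu n) 0"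

definition np :: "int \<Rightarrow> int \<Rightarrow> nat" where
  "np nu p = (LEAST n. n \<ge> 1 \<and> p dvd Ccoef nu n)"

text \<open>Reduction modulo p, where p = CARD('p).\<close>
definition redp :: "int poly \<Rightarrow> 'p::prime_card mod_ring poly" where
  "redp f = map_poly of_int f"

end

theory Submission
  imports Defs
begin

(* Over F_p let Q_k be the reduction of P_k, so Q_(j+k) = Q_j o Q_k and Q_k' = 2^k Q_0 ... Q_(k-1).
   With m = n(p) the constant term of Q_m vanishes, so Q_m = t^4 R + D t^2 and
   Q_(m+n) = Q_n^2 T, where T is the polynomial of the theorem.  Modulo a prime q dividing Q_j,
   Q_k is congruent to the constant Q_(k-j)(0) for k >= j, and these constants vanish exactly
   at the multiples of m.  If q^2 divides T, then q divides Q_(m+n)' and hence some Q_j with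
   j < m + n; as q also divides Q_(m+n), this forces j <= n and m | n - j, so q divides Q_n and
   therefore the constant D = 2^(m-1) Q_1(0) ... Q_(m-1)(0), which is nonzero. *)

fun quad_iter :: "'a::comm_ring_1 \<Rightarrow> nat \<Rightarrow> 'a poly" where
  "quad_iter a 0 = [:0, 1:]"
| "quad_iter a (Suc n) = (quad_iter a n)\<^sup>2 - [:a:]"

declare quad_iter.simps(2) [simp del]

lemma Ppoly_eq_quad_iter: "Ppoly nu n = quad_iter nu n"
  by (induction n) (simp_all add: quad_iter.simps power2_eq_square)

lemma (in map_poly_comm_ring_hom) map_poly_quad_iter:
  "map_poly hom (quad_iter a n) = quad_iter (hom a) n"
  by (induction n) (simp_all add: quad_iter.simps hom_distribs)

lemma quad_iter_add: "quad_iter a (m + n) = pcompose (quad_iter a m) (quad_iter a n)"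
  by (induction m) (simp_all add: quad_iter.simps pcompose_diff pcompose_hom.hom_power)

lemma degree_quad_iter: "degree (quad_iter (a::'a::idom) n) = 2 ^ n"
proof (induction n)
  case (Suc n)
  then have "quad_iter a n \<noteq> 0"
    by (metis degree_0 power_not_zero zero_neq_numeral)
  then have "degree ((quad_iter a n)\<^sup>2) = 2 ^ Suc n"
    using Suc by (simp add: degree_power_eq)
  moreover have "degree ((quad_iter a n)\<^sup>2 + [:- a:]) = degree ((quad_iter a n)\<^sup>2)"
    using calculation by (intro degree_add_eq_left) simp
  ultimately show ?case
    by (simp add: quad_iter.simps diff_conv_add_uminus del: add_uminus_conv_diff)
qed simp

lemma quad_iter_nonzero: "quad_iter (a::'a::idom) n \<noteq> 0"
  using degree_quad_iter[of a n] by (metis degree_0 power_not_zero zero_neq_numeral)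

lemma pderiv_quad_iter: "pderiv (quad_iter (a::'a::idom) n) = 2 ^ n * (\<Prod>j<n. quad_iter a j)"
  by (induction n)
    (simp_all add: quad_iter.simps power2_eq_square pderiv_mult pderiv_diff pderiv_singleton
      pderiv_pCons algebra_simps)

lemma coeff_mult_odd_eq_0:
  assumes "\<And>i. odd i \<Longrightarrow> coeff f i = 0" "\<And>i. odd i \<Longrightarrow> coeff g i = 0" "odd k"
  shows "coeff (f * g) k = 0"
  unfolding coeff_mult
proof (intro sum.neutral ballI)
  fix j
  assume "j \<in> {..k}"
  then have "odd j \<or> odd (k - j)"
    using \<open>odd k\<close> by (auto simp: even_diff_nat)
  then show "coeff f j * coeff g (k - j) = 0"
    using assms(1,2) by (metis mult_zero_left mult_zero_right)
qed

lemma coeff_quad_iter_odd: "odd i \<Longrightarrow> coeff (quad_iter a (Suc n)) i = 0"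
proof (induction n arbitrary: i)
  case 0
  then show ?case
    by (auto simp: quad_iter.simps power2_eq_square coeff_pCons split: nat.split)
next
  case (Suc n)
  then show ?case
    by (auto simp: quad_iter.simps(2)[of a "Suc n"] power2_eq_square coeff_mult_odd_eq_0 coeff_pCons
        split: nat.split)
qed

lemma coeff_quad_iter_2:
  "coeff (quad_iter a (Suc n)) 2 = 2 ^ n * (\<Prod>j\<in>{1..n}. poly (quad_iter a j) 0)"
proof (induction n)
  case (Suc n)
  let ?q = "quad_iter a (Suc n)"
  have "coeff (quad_iter a (Suc (Suc n))) 2 = coeff (?q * ?q) 2"
    by (simp add: quad_iter.simps(2)[of a "Suc n"] power2_eq_square numeral_2_eq_2)
  also have "\<dots> = 2 * poly ?q 0 * coeff ?q 2"
    using coeff_quad_iter_odd[of 1 a n]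
    by (simp add: coeff_mult numeral_2_eq_2 atMost_Suc poly_0_coeff_0 algebra_simps)
  finally show ?case
    using Suc by (simp add: prod.nat_ivl_Suc')
qed (simp add: quad_iter.simps power2_eq_square numeral_2_eq_2)

lemma coeff_quad_iter_2_nonzero:
  fixes a :: "'a::idom"
  assumes "(2::'a) \<noteq> 0" and "0 < m"
    and "\<And>j. 0 < j \<Longrightarrow> j < m \<Longrightarrow> poly (quad_iter a j) 0 \<noteq> 0"
  shows "coeff (quad_iter a m) 2 \<noteq> 0"
proof -
  obtain k where "m = Suc k"
    using \<open>0 < m\<close> by (cases m) auto
  then show ?thesis
    using assms by (simp add: coeff_quad_iter_2)
qed

lemma poly_quad_iter_0_add:
  assumes "poly (quad_iter a m) 0 = 0"
  shows "poly (quad_iter a (i + m)) 0 = poly (quad_iter a i) 0"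
  using assms by (simp add: quad_iter_add poly_pcompose)

lemma poly_quad_iter_0_eq_0_iff:
  assumes "0 < m" and "poly (quad_iter a m) 0 = 0"
    and "\<And>j. 0 < j \<Longrightarrow> j < m \<Longrightarrow> poly (quad_iter a j) 0 \<noteq> 0"
  shows "poly (quad_iter a i) 0 = 0 \<longleftrightarrow> m dvd i"
proof -
  have "poly (quad_iter a (r + k * m)) 0 = poly (quad_iter a r) 0" for r k
  proof (induction k)
    case (Suc k)
    have "poly (quad_iter a (r + Suc k * m)) 0 = poly (quad_iter a ((r + k * m) + m)) 0"
      by (simp add: algebra_simps)
    also have "\<dots> = poly (quad_iter a r) 0"
      using Suc.IH poly_quad_iter_0_add[OF assms(2)] by simp
    finally show ?case .
  qed simp
  from this[of "i mod m" "i div m"]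
  have "poly (quad_iter a i) 0 = poly (quad_iter a (i mod m)) 0"
    by simp
  moreover have "poly (quad_iter a (i mod m)) 0 \<noteq> 0" if "i mod m \<noteq> 0"
    using assms(1,3) that by simp
  ultimately show ?thesis
    by (cases "i mod m = 0") (simp_all add: dvd_eq_mod_eq_0)
qed

lemma pcompose_eq_square_mult_shift4:
  fixes f g :: "'a::comm_ring_1 poly"
  assumes "coeff f 0 = 0" and "coeff f 1 = 0" and "coeff f 3 = 0"
  shows "pcompose f g = g\<^sup>2 * (g\<^sup>2 * pcompose (poly_shift 4 f) g + [:coeff f 2:])"
proof -
  define R D where "R = poly_shift 4 f" and "D = coeff f 2"
  have "f = monom 1 4 * R + [:0, 0, D:]"
  proof (rule poly_eqI)
    fix i
    show "coeff f i = coeff (monom 1 4 * R + [:0, 0, D:]) i"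
      using assms unfolding R_def D_def
      by (cases "i < 4")
        (auto simp: coeff_monom_mult coeff_poly_shift coeff_pCons numeral_eq_Suc less_Suc_eq
          split: nat.split)
  qed
  then have "pcompose f g = pcompose (monom 1 4) g * pcompose R g + pcompose [:0, 0, D:] g"
    by (simp only: pcompose_add pcompose_mult)
  also have "\<dots> = g\<^sup>2 * (g\<^sup>2 * pcompose R g + [:D:])"
    by (simp add: monom_altdef pcompose_smult pcompose_hom.hom_power algebra_simps
        power2_eq_square power4_eq_xxxx)
  finally show ?thesis
    unfolding R_def D_def .
qed

lemma dvd_pcompose_minus_const: "g dvd pcompose f g - [:poly f 0:]"
  by (cases f rule: pCons_cases) (simp add: pcompose_pCons)

lemma prime_dvd_const_poly_iff:
  assumes "prime (q :: 'a::field_gcd poly)"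
  shows "q dvd [:c:] \<longleftrightarrow> c = 0"
proof
  assume "q dvd [:c:]"
  show "c = 0"
  proof (rule ccontr)
    assume "c \<noteq> 0"
    then have "is_unit [:c:]"
      by (rule is_unit_triv)
    with \<open>q dvd [:c:]\<close> have "is_unit q"
      by (rule dvd_unit_imp_unit)
    with assms show False
      using not_prime_unit by blast
  qed
qed simp

lemma prime_dvd_pcompose_iff:
  fixes q g :: "'a::field_gcd poly"
  assumes "prime q" and "q dvd g"
  shows "q dvd pcompose f g \<longleftrightarrow> poly f 0 = 0"
proof -
  have "q dvd pcompose f g - [:poly f 0:]"
    using assms(2) dvd_pcompose_minus_const by (rule dvd_trans)
  from dvd_add_right_iff[OF this, of "[:poly f 0:]"]
  have "q dvd pcompose f g \<longleftrightarrow> q dvd [:poly f 0:]"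
    by simp
  with assms(1) show ?thesis
    by (simp add: prime_dvd_const_poly_iff)
qed

lemma square_dvd_imp_dvd_pderiv:
  fixes q f :: "'a::idom poly"
  assumes "q\<^sup>2 dvd f"
  shows "q dvd pderiv f"
proof -
  from assms obtain g where "f = q\<^sup>2 * g" ..
  then have "f = q * (q * g)"
    by (simp add: power2_eq_square)
  then have "pderiv f = q * (q * pderiv g + 2 * g * pderiv q)"
    by (simp add: pderiv_mult algebra_simps)
  then show ?thesis
    by simp
qed

lemma prime_dvd_pderiv_quad_iter:
  fixes a :: "'a::field_gcd" and q :: "'a poly"
  assumes "(2::'a) \<noteq> 0" and "prime q" and "q dvd pderiv (quad_iter a n)"
  obtains j where "j < n" and "q dvd quad_iter a j"
proof -
  have "(2::'a poly) = [:2:]"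
    by (simp add: numeral_poly)
  then have "is_unit (2::'a poly)"
    using is_unit_triv[OF assms(1)] by simp
  then have "is_unit ((2::'a poly) ^ n)"
    using is_unit_power_iff by blast
  then have "\<not> q dvd 2 ^ n"
    using assms(2) by (meson dvd_unit_imp_unit not_prime_unit)
  then have "q dvd (\<Prod>j<n. quad_iter a j)"
    using assms(2,3) by (simp add: pderiv_quad_iter prime_dvd_mult_iff)
  then show ?thesis
    using that assms(2) by (auto simp: prime_dvd_prod_iff)
qed

lemma prime_dvd_quad_iter_iff:
  fixes a :: "'a::field_gcd" and q :: "'a poly"
  assumes "prime q" and "q dvd quad_iter a j" and "j \<le> k"
  shows "q dvd quad_iter a k \<longleftrightarrow> poly (quad_iter a (k - j)) 0 = 0"
  using prime_dvd_pcompose_iff[OF assms(1,2)] quad_iter_add[of a "k - j" j] assms(3)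
  by simp

lemma quad_iter_add_eq_square_mult:
  assumes "0 < m" and "poly (quad_iter a m) 0 = 0"
  shows "quad_iter a (m + n) = (quad_iter a n)\<^sup>2 *
    ((quad_iter a n)\<^sup>2 * pcompose (poly_shift 4 (quad_iter a m)) (quad_iter a n)
      + [:coeff (quad_iter a m) 2:])"
proof -
  obtain k where "m = Suc k"
    using assms(1) by (cases m) auto
  then have "coeff (quad_iter a m) 1 = 0" and "coeff (quad_iter a m) 3 = 0"
    using coeff_quad_iter_odd[of 1 a k] coeff_quad_iter_odd[of 3 a k] by simp_all
  moreover have "coeff (quad_iter a m) 0 = 0"
    using assms(2) by (simp add: poly_0_coeff_0)
  ultimately show ?thesis
    by (simp add: quad_iter_add pcompose_eq_square_mult_shift4)
qed

theorem squarefree_quad_iter_cofactor: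
  fixes a :: "'a::field_gcd"
  assumes two: "(2::'a) \<noteq> 0" and "0 < m" and "poly (quad_iter a m) 0 = 0"
    and "\<And>j. 0 < j \<Longrightarrow> j < m \<Longrightarrow> poly (quad_iter a j) 0 \<noteq> 0"
  shows "squarefree ((quad_iter a n)\<^sup>2 *
    pcompose (poly_shift 4 (quad_iter a m)) (quad_iter a n) + [:coeff (quad_iter a m) 2:])"
    (is "squarefree ?T")
proof -
  let ?Q = "quad_iter a" and ?D = "coeff (quad_iter a m) 2"
  have Q_split: "?Q (m + n) = (?Q n)\<^sup>2 * ?T"
    using assms(2,3) by (rule quad_iter_add_eq_square_mult)
  have Q_zero_iff: "poly (?Q i) 0 = 0 \<longleftrightarrow> m dvd i" for i
    using assms(2-4) by (rule poly_quad_iter_0_eq_0_iff)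
  have "?D \<noteq> 0"
    using two assms(2,4) by (rule coeff_quad_iter_2_nonzero)
  have "?T \<noteq> 0"
    using Q_split quad_iter_nonzero[of a "m + n"] by (metis mult_zero_right)
  show ?thesis
    unfolding squarefree_factorial_semiring[OF \<open>?T \<noteq> 0\<close>]
  proof (intro allI impI notI)
    fix q
    assume q: "prime q" and "q\<^sup>2 dvd ?T"
    have "q dvd q\<^sup>2"
      by (simp add: power2_eq_square)
    then have "q dvd ?T"
      using \<open>q\<^sup>2 dvd ?T\<close> by (rule dvd_trans)
    then have "q dvd ?Q (m + n)"
      unfolding Q_split by simp
    have "q\<^sup>2 dvd ?Q (m + n)"
      unfolding Q_split using \<open>q\<^sup>2 dvd ?T\<close> by simp
    then obtain j where "j < m + n" and "q dvd ?Q j"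
      by (rule prime_dvd_pderiv_quad_iter[OF two q square_dvd_imp_dvd_pderiv])
    with \<open>q dvd ?Q (m + n)\<close> have "m dvd m + n - j"
      using prime_dvd_quad_iter_iff[OF q] Q_zero_iff by simp
    moreover have "0 < m + n - j"
      using \<open>j < m + n\<close> by simp
    ultimately have "m \<le> m + n - j"
      by (rule dvd_imp_le)
    then have "j \<le> n"
      using \<open>j < m + n\<close> by arith
    then have "m + n - j = m + (n - j)"
      by simp
    with \<open>m dvd m + n - j\<close> have "m dvd n - j"
      by simp
    with \<open>j \<le> n\<close> have "q dvd ?Q n"
      using prime_dvd_quad_iter_iff[OF q \<open>q dvd ?Q j\<close>] Q_zero_iff by simp
    then have "q dvd ?T - [:?D:]"
      by (simp add: power2_eq_square)
    with \<open>q dvd ?T\<close> have "q dvd ?T - (?T - [:?D:])"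
      by (rule dvd_diff)
    then have "q dvd [:?D:]"
      by simp
    with q \<open>?D \<noteq> 0\<close> show False
      by (simp add: prime_dvd_const_poly_iff)
  qed
qed

lemma redp_Ppoly: "redp (Ppoly nu n) = quad_iter (of_int nu) n"
  unfolding redp_def Ppoly_eq_quad_iter by (rule of_int_poly_hom.map_poly_quad_iter)

lemma redp_Rpoly: "redp (Rpoly nu n) = poly_shift 4 (redp (Ppoly nu n))"
  by (rule poly_eqI) (simp add: redp_def Rpoly_def coeff_map_poly coeff_poly_shift)

lemma of_int_Dcoef: "of_int (Dcoef nu n) = coeff (redp (Ppoly nu n)) 2"
  by (simp add: redp_def Dcoef_def coeff_map_poly)

lemma of_int_Ccoef: "of_int (Ccoef nu n) = poly (redp (Ppoly nu n)) 0"
  by (simp add: redp_def Ccoef_def coeff_map_poly poly_0_coeff_0)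

lemma of_int_mod_ring_eq_0_iff:
  "(of_int x :: 'p::prime_card mod_ring) = 0 \<longleftrightarrow> int CARD('p) dvd x"
  by (simp add: of_int_eq_0_iff_char_dvd semiring_char_mod_ring)

lemma two_mod_ring_nonzero:
  assumes "odd (CARD('p::prime_card))"
  shows "(2 :: 'p mod_ring) \<noteq> 0"
proof
  assume "(2 :: 'p mod_ring) = 0"
  then have "(of_int 2 :: 'p mod_ring) = 0"
    by simp
  then have "int CARD('p) dvd 2"
    by (simp only: of_int_mod_ring_eq_0_iff)
  moreover have "2 \<le> CARD('p)"
    using prime_card prime_ge_2_nat by blast
  ultimately have "CARD('p) = 2"
    by (auto dest: zdvd_imp_le)
  with assms show False
    by simp
qed

lemma np_spec:
  assumes "\<exists>n\<ge>1. p dvd Ccoef nu n"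
  shows "1 \<le> np nu p" and "p dvd Ccoef nu (np nu p)"
  using LeastI_ex[of "\<lambda>n. n \<ge> 1 \<and> p dvd Ccoef nu n"] assms unfolding np_def by auto

lemma np_le: "1 \<le> j \<Longrightarrow> p dvd Ccoef nu j \<Longrightarrow> np nu p \<le> j"
  unfolding np_def by (rule Least_le) simp

theorem lemma4p7:
  fixes nu :: int and p :: int
  assumes "nu \<ge> 3" and "squarefree nu"
    and "nu mod 4 = 2 \<or> nu mod 4 = 3"
    and "p = int CARD('p::prime_card)" and "odd p" and "\<not> p dvd nu"
    and "\<exists>n\<ge>1. p dvd Ccoef nu n"
  shows "\<forall>n. squarefree
     ((redp (Ppoly nu n) :: 'p mod_ring poly)\<^sup>2
       * pcompose (redp (Rpoly nu (np nu p))) (redp (Ppoly nu n))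
       + [:of_int (Dcoef nu (np nu p)):])"
proof
  fix n
  let ?m = "np nu p" and ?a = "of_int nu :: 'p mod_ring"
  have C_iff: "poly (quad_iter ?a k) 0 = 0 \<longleftrightarrow> p dvd Ccoef nu k" for k
    using of_int_mod_ring_eq_0_iff[of "Ccoef nu k", where 'p = 'p]
    by (simp add: of_int_Ccoef redp_Ppoly assms(4))
  have "(2 :: 'p mod_ring) \<noteq> 0"
    using assms(4,5) by (intro two_mod_ring_nonzero) simp
  moreover have "0 < ?m" and "poly (quad_iter ?a ?m) 0 = 0"
    using np_spec[OF assms(7)] C_iff by auto
  moreover have "poly (quad_iter ?a j) 0 \<noteq> 0" if "0 < j" and "j < ?m" for j
    using np_le[of j p nu] that C_iff by auto
  ultimately show "squarefree
     ((redp (Ppoly nu n) :: 'p mod_ring poly)\<^sup>2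
       * pcompose (redp (Rpoly nu ?m)) (redp (Ppoly nu n)) + [:of_int (Dcoef nu ?m):])"
    unfolding redp_Rpoly of_int_Dcoef redp_Ppoly by (rule squarefree_quad_iter_cofactor)
qed

end
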